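(* Let $\{x_k\}$ be generated by the IR-IG method with positive sequences $\{\gamma_k\}$, $\{\lambda_k\}$, and let $k\ge 1$ be such that $0<\gamma_k\lambda_k\mu_h\le 2m$. Then $$\|x_{k+1}-x_{\lambda_k}^*\|^2\le\left(1-\frac{\gamma_k\lambda_k\mu_h}{2m}\right)\|x_k-x_{\lambda_{k-1}}^*\|^2+\frac{3mC_h^2}{\gamma_k\lambda_k\mu_h^3}\left|1-\frac{\lambda_{k-1}}{\lambda_k}\right|^2+6m^2\gamma_k^2\left(C_f^2+\lambda_k^2C_h^2\right).$$
   Context: Standing setup: $X\subset\mathbb{R}^n$ is nonempty, compact and convex. $f_1,\dots,f_m:\mathbb{R}^n\to\mathbb{R}$ are convex (possibly nondifferentiable) functions and $f=\sum_{i=1}^m f_i$. $h:\mathbb{R}^n\to\mathbb{R}$ is strongly convex with parameter $\mu_h>0$ (possibly nondifferentiable), i.e. $h(y)\ge h(x)+g^T(y-x)+\frac{\mu_h}{2}\|y-x\|^2$ for all $x,y$ and all $g\in\partial h(x)$. For $\lambda>0$, $x_\lambda^*$ denotes the unique minimizer of $f+\lambda h$ over $X$. $C_f,C_h$ are constants such that $\|g\|\le C_f$ for every $g\in\partial f_i(x)$, $i=1,\dots,m$, $x\in X$, and $\|g\|\le C_h$ for every $g\in\partial h(x)$, $x\in X$. $\mathcal{P}_X$ denotes Euclidean projection onto $X$. IR-IG method: given $x_0\in X$ and positive sequences $\{\gamma_k\}$ (step sizes) and $\{\lambda_k\}$ (regularization parameters), for each $k\ge0$ set $x_{k,0}=x_k$;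 for $i=0,\dots,m-1$ pick any $g_{f_{i+1}}(x_{k,i})\in\partial f_{i+1}(x_{k,i})$ and $g_h(x_{k,i})\in\partial h(x_{k,i})$ and set $x_{k,i+1}=\mathcal{P}_X\big(x_{k,i}-\gamma_k\big(g_{f_{i+1}}(x_{k,i})+\tfrac{\lambda_k}{m}g_h(x_{k,i})\big)\big)$; then set $x_{k+1}=x_{k,m}$. *)

theory Defs
  imports "HOL-Analysis.Analysis"
begin

definition subdiff :: "('a::real_inner \<Rightarrow> real) \<Rightarrow> 'a \<Rightarrow> 'a set" where
  "subdiff F x = {g. \<forall>y. F y \<ge> F x + inner g (y - x)}"

definition strongly_convex :: "('a::real_inner \<Rightarrow> real) \<Rightarrow> real \<Rightarrow> bool" where
  "strongly_convex F mu \<longleftrightarrow> convex_on UNIV F \<and>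
     (\<forall>x y. \<forall>g\<in>subdiff F x. F y \<ge> F x + inner g (y - x) + mu / 2 * (norm (y - x))\<^sup>2)"

definition is_reg_min :: "'a set \<Rightarrow> ('a \<Rightarrow> real) \<Rightarrow> ('a \<Rightarrow> real) \<Rightarrow> real \<Rightarrow> 'a \<Rightarrow> bool" where
  "is_reg_min X f h lam z \<longleftrightarrow> z \<in> X \<and> (\<forall>y\<in>X. f z + lam * h z \<le> f y + lam * h y)"

end

theory Submission
  imports Defs
begin

text \<open>One cycle of IR-IG is an incremental projected subgradient pass over the components
  \<open>f\<^sub>i + (\<lambda>\<^sub>k/m) h\<close> of \<open>f + \<lambda>\<^sub>k h\<close>. Measuring every subgradient inequality against the start
  \<open>x\<^sub>k\<close> of the cycle costs \<open>\<gamma>\<^sub>k\<^sup>2 (m C\<^sub>f + \<lambda>\<^sub>k C\<^sub>h)\<^sup>2\<close>, and the quadratic growth of the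
  \<open>\<lambda>\<^sub>k \<mu>\<^sub>h\<close>-strongly convex objective around its minimizer \<open>x\<^sup>*(\<lambda>\<^sub>k)\<close> turns the remaining
  descent into the factor \<open>1 - \<gamma>\<^sub>k \<lambda>\<^sub>k \<mu>\<^sub>h\<close>. Replacing \<open>x\<^sup>*(\<lambda>\<^sub>k)\<close> by \<open>x\<^sup>*(\<lambda>\<^sub>k\<^sub>-\<^sub>1)\<close> on the
  right costs a Young-inequality term, which is controlled because the regularized minimizers
  move Lipschitz in \<open>\<lambda>\<close>: \<open>norm (x\<^sup>*(\<lambda>) - x\<^sup>*(\<lambda>')) \<le> C\<^sub>h \<bar>\<lambda> - \<lambda>'\<bar> / (\<lambda> \<mu>\<^sub>h)\<close>.\<close>

text \<open>A hyperplane separating the epigraph from the open ray below \<open>(a, f a)\<close> cannot be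
  vertical, so it is the graph of an affine minorant touching \<open>f\<close> at \<open>a\<close>.\<close>

lemma subdiff_nonempty:
  fixes f :: "'a::euclidean_space \<Rightarrow> real"
  assumes "convex_on UNIV f"
  shows "subdiff f a \<noteq> {}"
proof -
  define S :: "('a \<times> real) set" where "S = {a} \<times> {..<f a}"
  define T where "T = epigraph UNIV f"
  have "convex S" unfolding S_def by (intro convex_Times) auto
  moreover have "convex T" unfolding T_def using assms by (rule convex_epigraphI)
  moreover have "S \<noteq> {}" unfolding S_def by (auto intro: exI[of _ "f a - 1"])
  moreover have "T \<noteq> {}" unfolding T_def epigraph_def by auto
  moreover have "S \<inter> T = {}" unfolding S_def T_def epigraph_def by auto
  ultimately obtain w b where w: "w \<noteq> 0"
    and hS: "\<forall>p\<in>S. inner w p \<le> b" and hT: "\<forall>p\<in>T. inner w p \<ge> b"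
    using separating_hyperplane_sets[of S T] by blast
  obtain v s where vs: "w = (v, s)" by (cases w)
  have above: "inner v y + s * t \<ge> b" if "f y \<le> t" for y t
    using hT[rule_format, of "(y,t)"] that by (auto simp: T_def epigraph_def vs inner_Pair)
  have below: "inner v a + s * t \<le> b" if "t < f a" for t
    using hS[rule_format, of "(a,t)"] that by (auto simp: S_def vs inner_Pair)
  have "s \<ge> 0"
    using below[of "f a - 1"] above[of a "f a"] by (simp add: algebra_simps)
  moreover have "s \<noteq> 0"
  proof
    assume "s = 0"
    then have "v \<noteq> 0" using w vs by (auto simp: zero_prod_def)
    have "inner v (a - v) \<ge> inner v a"
      using below[of "f a - 1"] above[of "a - v" "f (a - v)"] \<open>s = 0\<close> by simp
    then have "inner v v \<le> 0" by (simp add: inner_diff_right)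
    with \<open>v \<noteq> 0\<close> show False by (metis inner_gt_zero_iff not_le)
  qed
  ultimately have "s > 0" by simp
  have touch: "inner v a + s * f a \<le> b"
  proof (rule field_le_epsilon)
    fix e :: real assume "e > 0"
    have "inner v a + s * (f a - e / s) \<le> b" using below \<open>s > 0\<close> \<open>e > 0\<close> by simp
    then show "inner v a + s * f a \<le> b + e" using \<open>s > 0\<close> by (simp add: algebra_simps)
  qed
  have "f y \<ge> f a + inner (- (1 / s) *\<^sub>R v) (y - a)" for y
  proof -
    have "s * f y \<ge> s * (f a + inner (- (1 / s) *\<^sub>R v) (y - a))"
      using above[of y "f y"] touch \<open>s > 0\<close> by (simp add: inner_diff_right algebra_simps)
    then show ?thesis using \<open>s > 0\<close> by (simp add: mult_le_cancel_left_pos)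
  qed
  then show ?thesis unfolding subdiff_def by blast
qed

lemma convex_on_sum_functions:
  fixes F :: "'i \<Rightarrow> 'a::real_vector \<Rightarrow> real"
  assumes "finite I" "\<And>i. i \<in> I \<Longrightarrow> convex_on UNIV (F i)"
  shows "convex_on UNIV (\<lambda>y. \<Sum>i\<in>I. F i y)"
  using assms by (induction I rule: finite_induct) (auto simp: convex_on_const)

lemma subdiff_add_scaled:
  assumes "p \<in> subdiff f x" "q \<in> subdiff g x" "c \<ge> 0"
  shows "p + c *\<^sub>R q \<in> subdiff (\<lambda>y. f y + c * g y) x"
  unfolding subdiff_def
proof (intro CollectI allI)
  fix y
  have "f y \<ge> f x + inner p (y - x)" using assms(1) by (simp add: subdiff_def)
  moreover have "c * g y \<ge> c * (g x + inner q (y - x))"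
    using assms(2,3) by (intro mult_left_mono) (auto simp: subdiff_def)
  ultimately show "f y + c * g y \<ge> f x + c * g x + inner (p + c *\<^sub>R q) (y - x)"
    by (simp add: inner_add_left algebra_simps)
qed

lemma inner_ge_neg_bound_mult_norm:
  assumes "norm g \<le> C"
  shows "inner g v \<ge> - (C * norm v)"
  using Cauchy_Schwarz_ineq2[of g v] mult_right_mono[OF assms norm_ge_zero[of v]] by linarith

lemma subdiff_lower_bound:
  assumes "g \<in> subdiff f x" "norm g \<le> C"
  shows "f y \<ge> f x - C * norm (y - x)"
proof -
  have "f y \<ge> f x + inner g (y - x)" using assms(1) by (simp add: subdiff_def)
  with inner_ge_neg_bound_mult_norm[OF assms(2), of "y - x"] show ?thesis by linarith
qed

lemma strongly_convex_lower_bound: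
  assumes "strongly_convex h mu" "g \<in> subdiff h x" "norm g \<le> C"
  shows "h y \<ge> h x - C * norm (y - x) + mu / 2 * (norm (y - x))\<^sup>2"
proof -
  have "h y \<ge> h x + inner g (y - x) + mu / 2 * (norm (y - x))\<^sup>2"
    using assms(1,2) by (simp add: strongly_convex_def)
  with inner_ge_neg_bound_mult_norm[OF assms(3), of "y - x"] show ?thesis by linarith
qed

lemma strongly_convex_on_segment:
  fixes h :: "'a::euclidean_space \<Rightarrow> real"
  assumes h: "strongly_convex h mu" and t: "0 \<le> t" "t \<le> 1"
  shows "h ((1 - t) *\<^sub>R x + t *\<^sub>R y)
    \<le> (1 - t) * h x + t * h y - mu / 2 * t * (1 - t) * (norm (y - x))\<^sup>2"
proof -
  define p where "p = (1 - t) *\<^sub>R x + t *\<^sub>R y"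
  define N where "N = (norm (y - x))\<^sup>2"
  have "convex_on UNIV h" using h by (simp add: strongly_convex_def)
  then obtain g where g: "g \<in> subdiff h p" using subdiff_nonempty by blast
  define G where "G = inner g (y - x)"
  have sc: "h q \<ge> h p + inner g (q - p) + mu / 2 * (norm (q - p))\<^sup>2" for q
    using h g by (simp add: strongly_convex_def)
  have "y - p = (1 - t) *\<^sub>R (y - x)" "x - p = (- t) *\<^sub>R (y - x)"
    by (simp_all add: p_def algebra_simps)
  then have hy: "h y \<ge> h p + (1 - t) * G + mu / 2 * ((1 - t)\<^sup>2 * N)"
    and hx: "h x \<ge> h p - t * G + mu / 2 * (t\<^sup>2 * N)"
    using sc[of y] sc[of x] by (simp_all add: G_def N_def power_mult_distrib)
  have "t * (h p + (1 - t) * G + mu / 2 * ((1 - t)\<^sup>2 * N))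
      + (1 - t) * (h p - t * G + mu / 2 * (t\<^sup>2 * N)) \<le> t * h y + (1 - t) * h x"
    using hy hx t by (intro add_mono mult_left_mono) auto
  moreover have "t * (h p + (1 - t) * G + mu / 2 * ((1 - t)\<^sup>2 * N))
      + (1 - t) * (h p - t * G + mu / 2 * (t\<^sup>2 * N)) = h p + mu / 2 * t * (1 - t) * N"
    by (simp add: field_simps power2_eq_square)
  ultimately show ?thesis unfolding p_def N_def by linarith
qed

lemma reg_min_quadratic_growth:
  fixes f h :: "'a::euclidean_space \<Rightarrow> real"
  assumes f: "convex_on UNIV f" and h: "strongly_convex h mu" and l: "l \<ge> 0"
    and X: "convex X" and z: "is_reg_min X f h l z" and y: "y \<in> X"
  shows "l * mu / 2 * (norm (y - z))\<^sup>2 \<le> f y + l * h y - (f z + l * h z)"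
proof (rule field_le_mult_one_interval)
  \<comment> \<open>compare \<open>z\<close> with the points of the segment towards \<open>y\<close>, which approach \<open>z\<close> as \<open>s \<rightarrow> 1\<close>\<close>
  fix s :: real assume s: "0 < s" "s < 1"
  define t where "t = 1 - s"
  define p where "p = (1 - t) *\<^sub>R z + t *\<^sub>R y"
  define N where "N = (norm (y - z))\<^sup>2"
  have t: "0 < t" "t \<le> 1" using s by (auto simp: t_def)
  have "p \<in> X" unfolding p_def using X z y t by (intro convexD) (auto simp: is_reg_min_def)
  then have "f z + l * h z \<le> f p + l * h p" using z by (simp add: is_reg_min_def)
  also have "f p \<le> (1 - t) * f z + t * f y"
    unfolding p_def using f t by (intro convex_onD) auto
  also have "l * h p \<le> l * ((1 - t) * h z + t * h y - mu / 2 * t * (1 - t) * N)"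
    unfolding p_def N_def using strongly_convex_on_segment[OF h, of t] t l by (intro mult_left_mono) auto
  finally have "t * (s * (l * mu / 2 * N)) \<le> t * (f y + l * h y - (f z + l * h z))"
    by (simp add: t_def algebra_simps)
  then show "s * (l * mu / 2 * N) \<le> f y + l * h y - (f z + l * h z)"
    using t by simp
qed

lemma reg_min_dist_le:
  fixes f h :: "'a::euclidean_space \<Rightarrow> real"
  assumes f: "convex_on UNIV f" and h: "strongly_convex h mu" and mu: "mu > 0"
    and X: "convex X" and l: "l > 0" "l' \<ge> 0"
    and z: "is_reg_min X f h l z" and z': "is_reg_min X f h l' z'"
    and C: "\<And>y g. y \<in> X \<Longrightarrow> g \<in> subdiff h y \<Longrightarrow> norm g \<le> C"
  shows "norm (z - z') \<le> C * \<bar>l - l'\<bar> / (l * mu)"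
proof -
  define d where "d = norm (z - z')"
  have zX: "z \<in> X" and z'X: "z' \<in> X" using z z' by (auto simp: is_reg_min_def)
  have hconv: "convex_on UNIV h" using h by (simp add: strongly_convex_def)
  obtain g g' where g: "g \<in> subdiff h z" and g': "g' \<in> subdiff h z'"
    using subdiff_nonempty[OF hconv] by blast
  have C0: "C \<ge> 0" using C[OF zX g] norm_ge_zero order_trans by blast
  \<comment> \<open>adding the growth inequalities of both minimizers cancels \<open>f\<close>\<close>
  have "l * mu / 2 * d\<^sup>2 \<le> f z' + l * h z' - (f z + l * h z)"
    using reg_min_quadratic_growth[OF f h _ X z z'X] l by (simp add: d_def norm_minus_commute)
  moreover have "l' * mu / 2 * d\<^sup>2 \<le> f z + l' * h z - (f z' + l' * h z')"
    using reg_min_quadratic_growth[OF f h _ X z' zX] l by (simp add: d_def)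
  ultimately have "(l + l') * mu / 2 * d\<^sup>2 \<le> (l - l') * (h z' - h z)"
    by (simp add: algebra_simps add_divide_distrib)
  also have "\<dots> \<le> \<bar>l - l'\<bar> * \<bar>h z' - h z\<bar>" by (metis abs_ge_self abs_mult)
  also have "\<bar>h z' - h z\<bar> \<le> C * d - mu / 2 * d\<^sup>2"
    using strongly_convex_lower_bound[OF h g C[OF zX g], of z']
      strongly_convex_lower_bound[OF h g' C[OF z'X g'], of z]
    by (simp add: d_def norm_minus_commute)
  then have "\<bar>l - l'\<bar> * \<bar>h z' - h z\<bar> \<le> \<bar>l - l'\<bar> * (C * d - mu / 2 * d\<^sup>2)"
    by (intro mult_left_mono) auto
  finally have "(l + l' + \<bar>l - l'\<bar>) * mu / 2 * d\<^sup>2 \<le> \<bar>l - l'\<bar> * C * d"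
    by (simp add: field_simps)
  moreover have "l * mu * d\<^sup>2 \<le> (l + l' + \<bar>l - l'\<bar>) * mu / 2 * d\<^sup>2"
    using mu by (intro mult_right_mono) auto
  ultimately have "(l * mu * d) * d \<le> (\<bar>l - l'\<bar> * C) * d"
    by (simp add: power2_eq_square mult_ac)
  then have "l * mu * d \<le> \<bar>l - l'\<bar> * C \<or> d = 0"
    by (metis d_def mult_le_cancel_right norm_ge_zero order_less_le not_le)
  then show ?thesis
    using l mu C0 by (auto simp: d_def pos_le_divide_eq mult_ac)
qed

lemma closest_point_dist_le:
  assumes "convex X" "closed X" "q \<in> X"
  shows "norm (closest_point X u - q) \<le> norm (u - q)"
  using closest_point_lipschitz[OF assms(1,2), of u q] closest_point_self[OF assms(3)] assms(3)
  by (auto simp: dist_norm)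

lemma closest_point_step_sq_dist:
  assumes "convex X" "closed X" "z \<in> X"
  shows "(norm (closest_point X (w - c *\<^sub>R g) - z))\<^sup>2
    \<le> (norm (w - z))\<^sup>2 - 2 * c * inner g (w - z) + c\<^sup>2 * (norm g)\<^sup>2"
proof -
  have "(norm (closest_point X (w - c *\<^sub>R g) - z))\<^sup>2 \<le> (norm ((w - z) - c *\<^sub>R g))\<^sup>2"
    using closest_point_dist_le[OF assms, of "w - c *\<^sub>R g"]
    by (intro power_mono) (auto simp: algebra_simps)
  also have "\<dots> = (norm (w - z))\<^sup>2 - 2 * c * inner g (w - z) + c\<^sup>2 * (norm g)\<^sup>2"
    unfolding power2_norm_eq_inner
    by (simp add: inner_diff_left inner_diff_right inner_commute algebra_simps power2_eq_square)
  finally show ?thesis .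
qed

lemma projected_iterates_in_set:
  assumes "closed X" "w 0 \<in> X"
    and step: "\<And>i. i < n \<Longrightarrow> w (Suc i) = closest_point X (w i - c *\<^sub>R g i)"
    and "i \<le> n"
  shows "w i \<in> X"
  using assms by (cases i) (auto intro: closest_point_in_set)

lemma projected_iterates_drift:
  assumes X: "convex X" "closed X" and w0: "w 0 \<in> X"
    and step: "\<And>i. i < n \<Longrightarrow> w (Suc i) = closest_point X (w i - c *\<^sub>R g i)"
    and g: "\<And>i. i < n \<Longrightarrow> norm (g i) \<le> G" and c: "c \<ge> 0" and i: "i \<le> n"
  shows "norm (w i - w 0) \<le> real i * c * G"
  using i
proof (induction i)
  case 0 then show ?case by simp
next
  case (Suc i)
  then have "i < n" by simp
  then have "w i \<in> X" using projected_iterates_in_set[OF X(2) w0 step, of i] by simp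
  have "norm (w (Suc i) - w i) \<le> norm (w i - c *\<^sub>R g i - w i)"
    unfolding step[OF \<open>i < n\<close>] by (rule closest_point_dist_le[OF X \<open>w i \<in> X\<close>])
  also have "\<dots> \<le> c * G" using g[OF \<open>i < n\<close>] c by (simp add: mult_left_mono)
  finally show ?case
    using Suc norm_triangle_ineq[of "w (Suc i) - w i" "w i - w 0"] by (simp add: algebra_simps)
qed

lemma incremental_subgradient_cycle:
  fixes F :: "nat \<Rightarrow> 'a::euclidean_space \<Rightarrow> real"
  assumes X: "convex X" "closed X" and w0: "w 0 \<in> X" and z: "z \<in> X" and c: "c \<ge> 0"
    and step: "\<And>i. i < n \<Longrightarrow> w (Suc i) = closest_point X (w i - c *\<^sub>R g i)"
    and g: "\<And>i. i < n \<Longrightarrow> g i \<in> subdiff (F i) (w i)" "\<And>i. i < n \<Longrightarrow> norm (g i) \<le> G"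
    and s: "\<And>i. i < n \<Longrightarrow> s i \<in> subdiff (F i) (w 0)" "\<And>i. i < n \<Longrightarrow> norm (s i) \<le> G"
  shows "(norm (w n - z))\<^sup>2
    \<le> (norm (w 0 - z))\<^sup>2 - 2 * c * (\<Sum>i<n. F i (w 0) - F i z) + c\<^sup>2 * G\<^sup>2 * (real n)\<^sup>2"
proof -
  have one_step: "(norm (w (Suc i) - z))\<^sup>2
      \<le> (norm (w i - z))\<^sup>2 - 2 * c * (F i (w 0) - F i z) + c\<^sup>2 * G\<^sup>2 * (2 * real i + 1)"
    if i: "i < n" for i
  proof -
    have drift: "norm (w i - w 0) \<le> real i * c * G"
      using projected_iterates_drift[OF X w0 step g(2) c, of i] i by simp
    have G: "G \<ge> 0" using g(2)[OF i] norm_ge_zero order_trans by blast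
    \<comment> \<open>the subgradient at \<open>w i\<close> is compared with the objective at the start \<open>w 0\<close> of the cycle\<close>
    have "F i (w i) - F i z \<le> inner (g i) (w i - z)"
      using g(1)[OF i] unfolding subdiff_def by (force simp: inner_diff_right dest: spec[of _ z])
    moreover have "F i (w 0) - G * norm (w i - w 0) \<le> F i (w i)"
      by (rule subdiff_lower_bound[OF s[OF i]])
    moreover have "G * norm (w i - w 0) \<le> G * (real i * c * G)"
      using drift G by (rule mult_left_mono)
    ultimately have "F i (w 0) - F i z - real i * c * G\<^sup>2 \<le> inner (g i) (w i - z)"
      by (simp add: power2_eq_square mult_ac)
    then have "2 * c * (F i (w 0) - F i z - real i * c * G\<^sup>2) \<le> 2 * c * inner (g i) (w i - z)"
      using c by (intro mult_left_mono) auto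
    moreover have "c\<^sup>2 * (norm (g i))\<^sup>2 \<le> c\<^sup>2 * G\<^sup>2"
      using g(2)[OF i] by (intro mult_left_mono power_mono) auto
    ultimately show ?thesis
      using closest_point_step_sq_dist[OF X z, of "w i" c "g i"] step[OF i]
      by (simp add: algebra_simps power2_eq_square)
  qed
  have "(norm (w j - z))\<^sup>2
      \<le> (norm (w 0 - z))\<^sup>2 - 2 * c * (\<Sum>i<j. F i (w 0) - F i z) + c\<^sup>2 * G\<^sup>2 * (real j)\<^sup>2"
    if "j \<le> n" for j
    using that
  proof (induction j)
    case 0 then show ?case by simp
  next
    case (Suc j)
    then show ?case
      using one_step[of j] by (simp add: algebra_simps power2_eq_square)
  qed
  then show ?thesis by simp
qed

lemma norm_add_scaled_le:
  assumes "norm p \<le> A" "norm q \<le> B" "c \<ge> 0"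
  shows "norm (p + c *\<^sub>R q) \<le> A + c * B"
  using norm_triangle_ineq[of p "c *\<^sub>R q"] mult_left_mono[OF assms(2,3)] assms(1,3) by simp

lemma ir_ig_cycle_contraction:
  fixes fs :: "nat \<Rightarrow> 'a::euclidean_space \<Rightarrow> real"
  assumes X: "convex X" "closed X" and m: "m \<ge> 1"
    and fconv: "\<And>i. i \<in> {1..m} \<Longrightarrow> convex_on UNIV (fs i)"
    and h: "strongly_convex h mu"
    and Cf: "\<And>i y g. i \<in> {1..m} \<Longrightarrow> y \<in> X \<Longrightarrow> g \<in> subdiff (fs i) y \<Longrightarrow> norm g \<le> Cf"
    and Ch: "\<And>y g. y \<in> X \<Longrightarrow> g \<in> subdiff h y \<Longrightarrow> norm g \<le> Ch"
    and c: "c \<ge> 0" and l: "l \<ge> 0"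
    and z: "is_reg_min X (\<lambda>y. \<Sum>i=1..m. fs i y) h l z"
    and w0: "w 0 \<in> X"
    and gf: "\<And>i. i < m \<Longrightarrow> gf i \<in> subdiff (fs (Suc i)) (w i)"
    and gh: "\<And>i. i < m \<Longrightarrow> gh i \<in> subdiff h (w i)"
    and step: "\<And>i. i < m \<Longrightarrow> w (Suc i) = closest_point X (w i - c *\<^sub>R (gf i + (l / real m) *\<^sub>R gh i))"
  shows "(norm (w m - z))\<^sup>2 \<le> (1 - c * l * mu) * (norm (w 0 - z))\<^sup>2 + c\<^sup>2 * (real m * Cf + l * Ch)\<^sup>2"
proof -
  define f where "f = (\<lambda>y. \<Sum>i=1..m. fs i y)"
  define F where "F = (\<lambda>i y. fs (Suc i) y + l / real m * h y)"
  define G where "G = Cf + l / real m * Ch"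
  have lm: "l / real m \<ge> 0" using l by simp
  have wX: "i \<le> m \<Longrightarrow> w i \<in> X" for i by (rule projected_iterates_in_set[OF X(2) w0 step])
  have "\<forall>i. \<exists>p. i < m \<longrightarrow> p \<in> subdiff (fs (Suc i)) (w 0)"
    using subdiff_nonempty fconv by (metis Suc_leI atLeastAtMost_iff equals0I le_add1 plus_1_eq_Suc)
  then obtain sf where sf: "\<And>i. i < m \<Longrightarrow> sf i \<in> subdiff (fs (Suc i)) (w 0)" by metis
  have cycle: "(norm (w m - z))\<^sup>2
      \<le> (norm (w 0 - z))\<^sup>2 - 2 * c * (\<Sum>i<m. F i (w 0) - F i z) + c\<^sup>2 * G\<^sup>2 * (real m)\<^sup>2"
  proof (rule incremental_subgradient_cycle[OF X w0 _ c step])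
    show "z \<in> X" using z by (simp add: is_reg_min_def)
    fix i assume i: "i < m"
    then have fi: "Suc i \<in> {1..m}" by simp
    show "gf i + (l / real m) *\<^sub>R gh i \<in> subdiff (F i) (w i)"
      unfolding F_def by (rule subdiff_add_scaled[OF gf[OF i] gh[OF i] lm])
    show "norm (gf i + (l / real m) *\<^sub>R gh i) \<le> G"
      unfolding G_def using wX[of i] i gf[OF i] gh[OF i] by (intro norm_add_scaled_le Cf[OF fi] Ch lm) auto
    show "sf i + (l / real m) *\<^sub>R gh 0 \<in> subdiff (F i) (w 0)"
      unfolding F_def using m by (intro subdiff_add_scaled sf i gh lm) auto
    show "norm (sf i + (l / real m) *\<^sub>R gh 0) \<le> G"
      unfolding G_def using w0 sf[OF i] gh[of 0] m by (intro norm_add_scaled_le Cf[OF fi] Ch lm) auto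
  qed
  have "(\<Sum>i<m. F i (w 0) - F i z) = f (w 0) + l * h (w 0) - (f z + l * h z)"
    using m by (simp add: F_def f_def sum_subtractf sum.distrib sum.atLeast1_atMost_eq)
  also have "\<dots> \<ge> l * mu / 2 * (norm (w 0 - z))\<^sup>2"
    using reg_min_quadratic_growth[OF _ h l X(1) z[folded f_def] w0]
      convex_on_sum_functions[of "{1..m}" fs] fconv
    unfolding f_def by simp
  finally have "c * (l * mu * (norm (w 0 - z))\<^sup>2) \<le> c * (2 * (\<Sum>i<m. F i (w 0) - F i z))"
    using c by (intro mult_left_mono) auto
  moreover have "G * real m = real m * Cf + l * Ch" using m by (simp add: G_def field_simps)
  then have "c\<^sup>2 * G\<^sup>2 * (real m)\<^sup>2 = c\<^sup>2 * (real m * Cf + l * Ch)\<^sup>2"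
    by (metis power_mult_distrib mult.assoc)
  ultimately show ?thesis
    using cycle by (simp only: left_diff_distrib mult_1)
qed

lemma perturbed_contraction_le:
  fixes a M A b d :: real
  assumes a: "0 < a" "a \<le> 2 * M" and M: "1 \<le> M" and A: "0 \<le> A" "A \<le> (b + d)\<^sup>2"
  shows "(1 - a) * A \<le> (1 - a / (2 * M)) * b\<^sup>2 + 2 / a * d\<^sup>2"
proof (cases "a \<ge> 1")
  case True
  then have "(1 - a) * A \<le> 0" using A by (simp add: mult_nonpos_nonneg)
  moreover have "0 \<le> (1 - a / (2 * M)) * b\<^sup>2 + 2 / a * d\<^sup>2" using a M by simp
  ultimately show ?thesis by linarith
next
  case False
  \<comment> \<open>Young's inequality with weight \<open>a/2\<close>\<close>
  have "(b + d)\<^sup>2 \<le> (1 + a / 2) * b\<^sup>2 + (1 + 2 / a) * d\<^sup>2"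
  proof -
    have "0 \<le> (a * b - 2 * d)\<^sup>2 / (2 * a)" using a by simp
    also have "\<dots> = a / 2 * b\<^sup>2 + 2 / a * d\<^sup>2 - 2 * b * d"
      using a by (simp add: field_simps power2_eq_square)
    finally show ?thesis by (simp add: algebra_simps power2_eq_square)
  qed
  with A False have "(1 - a) * A \<le> (1 - a) * ((1 + a / 2) * b\<^sup>2 + (1 + 2 / a) * d\<^sup>2)"
    by (intro mult_left_mono) auto
  also have "\<dots> = (1 - a / 2 - a\<^sup>2 / 2) * b\<^sup>2 + (2 / a - 1 - a) * d\<^sup>2"
    using a by (simp add: field_simps power2_eq_square)
  also have "\<dots> \<le> (1 - a / (2 * M)) * b\<^sup>2 + 2 / a * d\<^sup>2"
  proof (intro add_mono mult_right_mono)
    have "a / (2 * M) \<le> a / 2" using a M by (intro divide_left_mono) auto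
    then show "1 - a / 2 - a\<^sup>2 / 2 \<le> 1 - a / (2 * M)" using zero_le_power2[of a] by linarith
  qed (use a in auto)
  finally show ?thesis .
qed

lemma sq_add_le_six_mult:
  fixes M p q :: real
  assumes "1 \<le> M"
  shows "(M * p + q)\<^sup>2 \<le> 6 * M\<^sup>2 * (p\<^sup>2 + q\<^sup>2)"
proof -
  have "(M * p + q)\<^sup>2 \<le> 2 * (M * p)\<^sup>2 + 2 * q\<^sup>2"
    using sum_squares_ge_zero[of "M * p - q" 0] by (simp add: algebra_simps power2_eq_square)
  also have "q\<^sup>2 \<le> M\<^sup>2 * q\<^sup>2" using assms by (simp add: mult_le_cancel_right1 one_le_power)
  finally have "(M * p + q)\<^sup>2 \<le> 2 * (M\<^sup>2 * (p\<^sup>2 + q\<^sup>2))"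
    by (simp add: power_mult_distrib algebra_simps)
  also have "\<dots> \<le> 6 * (M\<^sup>2 * (p\<^sup>2 + q\<^sup>2))" by simp
  finally show ?thesis by (simp add: mult.assoc)
qed

lemma minimizer_shift_penalty_le:
  fixes c l l' mu C d M :: real
  assumes c: "c > 0" and l: "l > 0" and mu: "mu > 0" and M: "1 \<le> M"
    and d: "0 \<le> d" "d \<le> C * \<bar>l - l'\<bar> / (l * mu)"
  shows "2 / (c * l * mu) * d\<^sup>2 \<le> 3 * M * C\<^sup>2 / (c * l * mu ^ 3) * \<bar>1 - l' / l\<bar>\<^sup>2"
proof -
  have "l * (1 - l' / l) = l - l'" using l by (simp add: field_simps)
  then have ll': "\<bar>l - l'\<bar> = l * \<bar>1 - l' / l\<bar>" by (metis abs_mult abs_of_pos l)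
  have "2 / (c * l * mu) * d\<^sup>2 \<le> 2 / (c * l * mu) * (C * \<bar>l - l'\<bar> / (l * mu))\<^sup>2"
    using c l mu d by (intro mult_left_mono power_mono) auto
  also have "\<dots> = 2 * C\<^sup>2 / (c * l * mu ^ 3) * \<bar>1 - l' / l\<bar>\<^sup>2"
    unfolding ll' using l mu by (simp add: field_simps power2_eq_square power3_eq_cube)
  also have "\<dots> \<le> 3 * M * C\<^sup>2 / (c * l * mu ^ 3) * \<bar>1 - l' / l\<bar>\<^sup>2"
    using M c l mu by (intro mult_right_mono divide_right_mono) auto
  finally show ?thesis .
qed

theorem lemma2:
  fixes X :: "(real ^ 'n) set"
    and fs :: "nat \<Rightarrow> real ^ 'n \<Rightarrow> real"
    and h :: "real ^ 'n \<Rightarrow> real"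
    and m :: nat and mu Cf Ch :: real
    and xstar :: "real \<Rightarrow> real ^ 'n"
    and gam lam :: "nat \<Rightarrow> real"
    and x :: "nat \<Rightarrow> real ^ 'n"
    and xi :: "nat \<Rightarrow> nat \<Rightarrow> real ^ 'n"
    and gf gh :: "nat \<Rightarrow> nat \<Rightarrow> real ^ 'n"
    and k :: nat
  assumes X: "X \<noteq> {}" "compact X" "convex X"
    and m: "m \<ge> 1"
    and fconv: "\<And>i. i \<in> {1..m} \<Longrightarrow> convex_on UNIV (fs i)"
    and mu: "mu > 0" and hsc: "strongly_convex h mu"
    and xstar: "\<And>l. l > 0 \<Longrightarrow> is_reg_min X (\<lambda>z. \<Sum>i=1..m. fs i z) h l (xstar l)"
    and Cf: "\<And>i z g. i \<in> {1..m} \<Longrightarrow> z \<in> X \<Longrightarrow> g \<in> subdiff (fs i) z \<Longrightarrow> norm g \<le> Cf"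
    and Ch: "\<And>z g. z \<in> X \<Longrightarrow> g \<in> subdiff h z \<Longrightarrow> norm g \<le> Ch"
    and gam_pos: "\<And>j. gam j > 0" and lam_pos: "\<And>j. lam j > 0"
    and x0: "x 0 \<in> X"
    and inner0: "\<And>j. xi j 0 = x j"
    and gf: "\<And>j i. i < m \<Longrightarrow> gf j i \<in> subdiff (fs (Suc i)) (xi j i)"
    and gh: "\<And>j i. i < m \<Longrightarrow> gh j i \<in> subdiff h (xi j i)"
    and step: "\<And>j i. i < m \<Longrightarrow>
       xi j (Suc i) = closest_point X (xi j i - gam j *\<^sub>R (gf j i + (lam j / real m) *\<^sub>R gh j i))"
    and outer: "\<And>j. x (Suc j) = xi j m"
    and k: "k \<ge> 1"
    and kstep: "0 < gam k * lam k * mu" "gam k * lam k * mu \<le> 2 * real m"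
  shows "(norm (x (Suc k) - xstar (lam k)))\<^sup>2
    \<le> (1 - gam k * lam k * mu / (2 * real m)) * (norm (x k - xstar (lam (k - 1))))\<^sup>2
      + 3 * real m * Ch\<^sup>2 / (gam k * lam k * mu ^ 3) * \<bar>1 - lam (k - 1) / lam k\<bar>\<^sup>2
      + 6 * (real m)\<^sup>2 * (gam k)\<^sup>2 * (Cf\<^sup>2 + (lam k)\<^sup>2 * Ch\<^sup>2)"
proof -
  define l l' z z' where "l = lam k" and "l' = lam (k - 1)"
    and "z = xstar (lam k)" and "z' = xstar (lam (k - 1))"
  define a where "a = gam k * l * mu"
  have M: "1 \<le> real m" using m by simp
  have l: "l > 0" "l' > 0" using lam_pos by (simp_all add: l_def l'_def)
  have z: "is_reg_min X (\<lambda>y. \<Sum>i=1..m. fs i y) h l z"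
    and z': "is_reg_min X (\<lambda>y. \<Sum>i=1..m. fs i y) h l' z'"
    using xstar l by (simp_all add: l_def l'_def z_def z'_def)
  have clX: "closed X" using X(2) by (rule compact_imp_closed)
  have xX: "x j \<in> X" for j
  proof (induction j)
    case (Suc j)
    then show ?case
      using projected_iterates_in_set[where g = "\<lambda>i. gf j i + (lam j / real m) *\<^sub>R gh j i",
          OF clX _ step, of m] inner0 outer by simp
  qed (rule x0)
  have cycle: "(norm (x (Suc k) - z))\<^sup>2
      \<le> (1 - a) * (norm (x k - z))\<^sup>2 + (gam k)\<^sup>2 * (real m * Cf + l * Ch)\<^sup>2"
    unfolding outer a_def inner0[symmetric, of k]
    using gam_pos[of k] l(1) xX[of k] inner0[of k] gf[of _ k] gh[of _ k] step[of _ k, folded l_def]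
    by (intro ir_ig_cycle_contraction[OF X(3) clX m fconv hsc Cf Ch _ _ z]) auto
  have contraction: "(1 - a) * (norm (x k - z))\<^sup>2
      \<le> (1 - a / (2 * real m)) * (norm (x k - z'))\<^sup>2 + 2 / a * (norm (z - z'))\<^sup>2"
    using norm_triangle_ineq[of "x k - z'" "z' - z"] kstep M
    by (intro perturbed_contraction_le power_mono) (auto simp: a_def l_def norm_minus_commute)
  have "norm (z - z') \<le> Ch * \<bar>l - l'\<bar> / (l * mu)"
    using reg_min_dist_le[OF _ hsc mu X(3) l(1) _ z z' Ch] l convex_on_sum_functions[of "{1..m}" fs] fconv
    by simp
  then have shift: "2 / a * (norm (z - z'))\<^sup>2 \<le> 3 * real m * Ch\<^sup>2 / (gam k * l * mu ^ 3) * \<bar>1 - l' / l\<bar>\<^sup>2"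
    unfolding a_def using gam_pos l mu M by (intro minimizer_shift_penalty_le) auto
  have noise: "(gam k)\<^sup>2 * (real m * Cf + l * Ch)\<^sup>2 \<le> 6 * (real m)\<^sup>2 * (gam k)\<^sup>2 * (Cf\<^sup>2 + l\<^sup>2 * Ch\<^sup>2)"
    using mult_left_mono[OF sq_add_le_six_mult[OF M, of Cf "l * Ch"], of "(gam k)\<^sup>2"]
    by (simp add: power_mult_distrib mult_ac)
  show ?thesis
    using cycle contraction shift noise unfolding a_def l_def l'_def z_def z'_def by linarith
qed

end
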